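(* Let $A\in\mathbb{R}^{N\times N}$ be symmetric positive semidefinite with smallest eigenvalue $\omega\ge0$, let $f$ be a sufficiently smooth $\mathbb{R}^N$-valued function, $\varepsilon>0$, $\tau>0$, $t_k=k\tau$, $f^k=f(t_k)$, and fix $n\ge1$. Let $y$ be a solution of $y'=-Ay+f$. Let $\tilde y$ be the solution of $\tilde y'+\varepsilon\tilde y''=-A\tilde y+f$ on an interval containing $[t_{n-1},t_{n+1}]$ with $\tilde y(t_n)=y(t_n)$, $\tilde y'(t_n)=y'(t_n)$, and assume $\tilde y$ is four times continuously differentiable there. Let $y^{n+1}$ be obtained by one step of the HM scheme $$\frac{y^{n+1}-y^{n-1}}{2\tau}+\varepsilon\frac{y^{n+1}-2y^n+y^{n-1}}{\tau^2}=-Ay^n+f^n$$ from the starting values $y^{n-1}=\tilde y(t_{n-1})$, $y^n=\tilde y(t_n)=y(t_n)$, and let $e^{n+1}=y(t_{n+1})-y^{n+1}$. Then $$e^{n+1}=\frac{2\tau^4}{\tau+2\varepsilon}\,C_1+\frac{2\tau^4\varepsilon}{\tau+2\varepsilon}\,C_2+\tilde e^{n+1}(\tau),\qquad \tilde e^{n+1}(\tau)=y(t_{n+1})-\tilde y(t_{n+1}),$$ where $C_1,C_2\in\mathbb{R}^N$ are such that for each component $i$ there exist points $\eta_{1,i},\eta_{2,i}\in[t_{n-1},t_{n+1}]$ with $(C_1)_i=\frac16\tilde y_i'''(\eta_{1,i})$ and $(C_2)_i=\frac1{12}\tilde y_i^{(4)}(\eta_{2,i})$. Moreover, for any vector norm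 $\|\cdot\|$ and constant $C$ with $\|e^{-tA}\|\le Ce^{-\omega t}$ for all $t\ge0$ (induced operator norm), $$\|\tilde e^{n+1}(\tau)\|\le C\varepsilon\,\tau\,\varphi(-\omega\tau)\max_{s\in[t_n,t_{n+1}]}\|\tilde y''(s)\|.$$
   Context: $\varphi(z)=(e^z-1)/z$ for $z\neq0$ and $\varphi(0)=1$. *)

theory Defs
  imports "HOL-Analysis.Analysis"
begin

definition phi :: "real \<Rightarrow> real" where
  "phi z = (if z = 0 then 1 else (exp z - 1) / z)"

fun matpow :: "real^'n^'n \<Rightarrow> nat \<Rightarrow> real^'n^'n" where
  "matpow M 0 = mat 1"
| "matpow M (Suc k) = M ** matpow M k"

definition mat_exp :: "real^'n^'n \<Rightarrow> real^'n^'n" where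
  "mat_exp M = (\<Sum>k. (1 / fact k) *\<^sub>R matpow M k)"

definition symmetric_matrix :: "real^'n^'n \<Rightarrow> bool" where
  "symmetric_matrix A \<longleftrightarrow> transpose A = A"

definition psd_matrix :: "real^'n^'n \<Rightarrow> bool" where
  "psd_matrix A \<longleftrightarrow> (\<forall>x. 0 \<le> x \<bullet> (A *v x))"

definition is_eigenvalue :: "real^'n^'n \<Rightarrow> real \<Rightarrow> bool" where
  "is_eigenvalue A \<mu> \<longleftrightarrow> (\<exists>v. v \<noteq> 0 \<and> A *v v = \<mu> *\<^sub>R v)"

definition smallest_eigenvalue :: "real^'n^'n \<Rightarrow> real \<Rightarrow> bool" where
  "smallest_eigenvalue A \<omega> \<longleftrightarrow> is_eigenvalue A \<omega> \<and> (\<forall>\<mu>. is_eigenvalue A \<mu> \<longrightarrow> \<omega> \<le> \<mu>)"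

definition is_vector_norm :: "(real^'n \<Rightarrow> real) \<Rightarrow> bool" where
  "is_vector_norm \<nu> \<longleftrightarrow>
     (\<forall>x. 0 \<le> \<nu> x) \<and> (\<forall>x. \<nu> x = 0 \<longleftrightarrow> x = 0) \<and>
     (\<forall>c x. \<nu> (c *\<^sub>R x) = \<bar>c\<bar> * \<nu> x) \<and> (\<forall>x y. \<nu> (x + y) \<le> \<nu> x + \<nu> y)"

definition induced_norm :: "(real^'n \<Rightarrow> real) \<Rightarrow> real^'n^'n \<Rightarrow> real" where
  "induced_norm \<nu> M = (SUP x \<in> {x. x \<noteq> 0}. \<nu> (M *v x) / \<nu> x)"

end

theory Submission
  imports Defs
begin

(* Componentwise, Taylor expansion of the modified solution Y0 about t_n, to third and to fourth
   order in both directions, followed by averaging the two Lagrange remainders (intermediate value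
   theorem), gives the central differences
     Y0(t_n + tau) - Y0(t_n - tau) = 2 tau Y1(t_n) + tau^3/3 Y3(eta1),
     Y0(t_n + tau) - 2 Y0(t_n) + Y0(t_n - tau) = tau^2 Y2(t_n) + tau^4/12 Y4(eta2).
   Multiplying the HM scheme by 2 tau^2 and subtracting the modified equation at t_n,
   Y1 + eps Y2 = -A Y0 + f, all terms except these remainders cancel.
   For the bound, d = y - Y0 solves d' = -A d + eps Y2 with d(t_n) = 0, so by variation of
   constants d(t_n + tau) is the integral of exp(-(t_n + tau - s) A) (eps Y2 s) over [t_n, t_n + tau];
   the decay hypothesis bounds the integrand by C eps exp(-omega (t_n + tau - s)) sup |Y2|, whose
   integral is C eps tau phi(-omega tau) sup |Y2|. *)


section \<open>Taylor expansion with one-sided derivatives\<close>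

lemma has_integral_weighted_mean_value:
  fixes g w :: "real \<Rightarrow> real"
  assumes "a \<le> b" and g: "continuous_on {a..b} g"
    and w: "\<And>x. x \<in> {a..b} \<Longrightarrow> 0 \<le> w x"
    and W: "(w has_integral W) {a..b}"
    and J: "((\<lambda>x. w x * g x) has_integral J) {a..b}"
  shows "\<exists>\<xi>\<in>{a..b}. J = W * g \<xi>"
proof -
  obtain p where p: "p \<in> {a..b}" "\<And>x. x \<in> {a..b} \<Longrightarrow> g p \<le> g x"
    using continuous_attains_inf[OF compact_Icc _ g] \<open>a \<le> b\<close> by auto
  obtain q where q: "q \<in> {a..b}" "\<And>x. x \<in> {a..b} \<Longrightarrow> g x \<le> g q"
    using continuous_attains_sup[OF compact_Icc _ g] \<open>a \<le> b\<close> by auto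
  have "W * g p \<le> J"
    using has_integral_le[OF has_integral_mult_left[OF W] J] p(2) w by (auto intro: mult_left_mono)
  moreover have "J \<le> W * g q"
    using has_integral_le[OF J has_integral_mult_left[OF W]] q(2) w by (auto intro: mult_left_mono)
  ultimately have "J \<in> closed_segment (W * g p) (W * g q)"
    by (auto simp: closed_segment_eq_real_ivl)
  moreover have seg: "closed_segment p q \<subseteq> {a..b}"
    using p(1) q(1) by (intro closed_segment_subset) auto
  moreover have "continuous_on (closed_segment p q) (\<lambda>x. W * g x)"
    using seg by (intro continuous_intros continuous_on_subset[OF g])
  ultimately show ?thesis
    using IVT'_closed_segment_real[of J "\<lambda>x. W * g x" p q] by (metis subsetD)
qed

(* Unlike Taylor_up, only one-sided derivatives are needed at the endpoints; the Lagrange remainder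
   is therefore obtained from the integral form of the remainder. *)
lemma Taylor_up_within:
  fixes Df :: "nat \<Rightarrow> real \<Rightarrow> real"
  assumes "0 < n" "a \<le> b"
    and Df: "\<And>m t. m < n \<Longrightarrow> t \<in> {a..b} \<Longrightarrow>
               (Df m has_real_derivative Df (Suc m) t) (at t within {a..b})"
    and cont: "continuous_on {a..b} (Df n)"
  shows "\<exists>\<xi>\<in>{a..b}. Df 0 b = (\<Sum>m<n. Df m a / fact m * (b - a) ^ m) + Df n \<xi> / fact n * (b - a) ^ n"
proof -
  define w where "w x = (b - x) ^ (n - 1) / fact (n - 1)" for x
  have remainder: "((\<lambda>x. w x * Df n x) has_integral Df 0 b - (\<Sum>m<n. Df m a / fact m * (b - a) ^ m)) {a..b}"
    using Taylor_has_integral[of n Df "Df 0" a b] Df \<open>0 < n\<close> \<open>a \<le> b\<close>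
    by (simp add: w_def has_real_derivative_iff_has_vector_derivative mult.commute)
  obtain k where n: "n = Suc k"
    using \<open>0 < n\<close> by (cases n) auto
  have "((\<lambda>x. - ((b - x) ^ n / fact n)) has_real_derivative w x) (at x within {a..b})" for x
  proof -
    have "((\<lambda>x. - ((b - x) ^ n / fact n)) has_real_derivative
            - (real n * (b - x) ^ (n - 1) * (0 - 1) / fact n)) (at x within {a..b})"
      by (auto intro!: derivative_eq_intros)
    also have "- (real n * (b - x) ^ (n - 1) * (0 - 1) / fact n) = w x"
      unfolding w_def n by (simp del: of_nat_Suc add: field_simps)
    finally show ?thesis .
  qed
  then have weight: "(w has_integral (b - a) ^ n / fact n) {a..b}"
    using fundamental_theorem_of_calculus[OF \<open>a \<le> b\<close>, of "\<lambda>x. - ((b - x) ^ n / fact n)" w]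
    by (simp add: has_real_derivative_iff_has_vector_derivative n)
  obtain \<xi> where "\<xi> \<in> {a..b}" "Df 0 b - (\<Sum>m<n. Df m a / fact m * (b - a) ^ m) = (b - a) ^ n / fact n * Df n \<xi>"
    using has_integral_weighted_mean_value[OF \<open>a \<le> b\<close> cont _ weight remainder]
    by (auto simp: w_def)
  then show ?thesis by (intro bexI[of _ \<xi>]) (simp_all add: algebra_simps)
qed

lemma Taylor_down_within:
  fixes Df :: "nat \<Rightarrow> real \<Rightarrow> real"
  assumes "0 < n" "a \<le> b"
    and Df: "\<And>m t. m < n \<Longrightarrow> t \<in> {a..b} \<Longrightarrow>
               (Df m has_real_derivative Df (Suc m) t) (at t within {a..b})"
    and cont: "continuous_on {a..b} (Df n)"
  shows "\<exists>\<xi>\<in>{a..b}. Df 0 a = (\<Sum>m<n. Df m b / fact m * (a - b) ^ m) + Df n \<xi> / fact n * (a - b) ^ n"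
proof -
  define Ef where "Ef m s = (-1) ^ m * Df m (- s)" for m s
  have "(Ef m has_real_derivative Ef (Suc m) t) (at t within {-b..-a})"
    if "m < n" "t \<in> {-b..-a}" for m t
  proof -
    have "(Df m has_real_derivative Df (Suc m) (-t)) (at (-t) within uminus ` {-b..-a})"
      using Df[of m "-t"] that by auto
    then have "(Df m \<circ> uminus has_real_derivative Df (Suc m) (-t) * -1) (at t within {-b..-a})"
      by (rule DERIV_image_chain) (auto intro!: derivative_eq_intros)
    from DERIV_cmult[OF this, of "(-1) ^ m"] show ?thesis
      by (simp add: Ef_def[abs_def] o_def)
  qed
  moreover have "continuous_on {-b..-a} (Ef n)"
    unfolding Ef_def by (intro continuous_intros continuous_on_compose2[OF cont]) auto
  ultimately obtain \<xi> where "\<xi> \<in> {-b..-a}"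
    and "Ef 0 (-a) = (\<Sum>m<n. Ef m (-b) / fact m * (b - a) ^ m) + Ef n \<xi> / fact n * (b - a) ^ n"
    using Taylor_up_within[of n "-b" "-a" Ef] \<open>0 < n\<close> \<open>a \<le> b\<close> by auto
  moreover have "(a - b) ^ m = (-1) ^ m * (b - a) ^ m" for m
    by (metis minus_diff_eq power_minus)
  ultimately show ?thesis
    by (intro bexI[of _ "- \<xi>"]) (auto simp: Ef_def mult_ac)
qed

lemma Taylor_symmetric_within:
  fixes Df :: "nat \<Rightarrow> real \<Rightarrow> real"
  assumes "0 < n" "0 \<le> h"
    and Df: "\<And>m t. m < n \<Longrightarrow> t \<in> {c - h..c + h} \<Longrightarrow>
               (Df m has_real_derivative Df (Suc m) t) (at t within {c - h..c + h})"
    and cont: "continuous_on {c - h..c + h} (Df n)"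
  shows "\<exists>\<eta>\<in>{c - h..c + h}. Df 0 (c + h) + (-1) ^ n * Df 0 (c - h) =
           (\<Sum>m<n. (1 + (-1) ^ (n + m)) * Df m c / fact m * h ^ m) + 2 * Df n \<eta> / fact n * h ^ n"
proof -
  have Df_sub: "(Df m has_real_derivative Df (Suc m) t) (at t within {l..u})"
    if "m < n" "t \<in> {l..u}" "{l..u} \<subseteq> {c - h..c + h}" for m t l u
    using has_field_derivative_subset[OF Df[OF that(1)] that(3)] that(2,3) by auto
  obtain \<xi>\<^sub>1 where "\<xi>\<^sub>1 \<in> {c..c + h}"
    and up: "Df 0 (c + h) = (\<Sum>m<n. Df m c / fact m * h ^ m) + Df n \<xi>\<^sub>1 / fact n * h ^ n"
    using Taylor_up_within[of n c "c + h" Df] assms Df_sub continuous_on_subset[OF cont] by auto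
  obtain \<xi>\<^sub>2 where "\<xi>\<^sub>2 \<in> {c - h..c}"
    and down: "Df 0 (c - h) = (\<Sum>m<n. Df m c / fact m * (- h) ^ m) + Df n \<xi>\<^sub>2 / fact n * (- h) ^ n"
    using Taylor_down_within[of n "c - h" c Df] assms Df_sub continuous_on_subset[OF cont] by auto
  have seg: "closed_segment \<xi>\<^sub>1 \<xi>\<^sub>2 \<subseteq> {c - h..c + h}"
    using \<open>\<xi>\<^sub>1 \<in> _\<close> \<open>\<xi>\<^sub>2 \<in> _\<close> by (intro closed_segment_subset) auto
  have "(Df n \<xi>\<^sub>1 + Df n \<xi>\<^sub>2) / 2 \<in> closed_segment (Df n \<xi>\<^sub>1) (Df n \<xi>\<^sub>2)"
    by (auto simp: closed_segment_eq_real_ivl)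
  then obtain \<eta> where "\<eta> \<in> {c - h..c + h}" and \<eta>: "Df n \<eta> = (Df n \<xi>\<^sub>1 + Df n \<xi>\<^sub>2) / 2"
    using IVT'_closed_segment_real continuous_on_subset[OF cont seg] seg by blast
  have sign: "(-1) ^ n * (- h) ^ k = (-1) ^ (n + k) * h ^ k" for k
    by (simp add: power_add power_minus[of h])
  have "(-1) ^ (n + n) = (1::real)"
    by (simp flip: mult_2 add: power_mult)
  then have "(-1) ^ n * Df 0 (c - h) =
          (\<Sum>m<n. Df m c / fact m * ((-1) ^ (n + m) * h ^ m)) + Df n \<xi>\<^sub>2 / fact n * h ^ n"
    unfolding down distrib_left sum_distrib_left mult.left_commute[of "(-1) ^ n"] sign by simp
  moreover have "(\<Sum>m<n. (1 + (-1) ^ (n + m)) * Df m c / fact m * h ^ m) =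
      (\<Sum>m<n. Df m c / fact m * h ^ m) + (\<Sum>m<n. Df m c / fact m * ((-1) ^ (n + m) * h ^ m))"
    unfolding sum.distrib[symmetric] by (intro sum.cong) (simp_all add: algebra_simps add_divide_distrib)
  moreover have "2 * Df n \<eta> / fact n * h ^ n = Df n \<xi>\<^sub>1 / fact n * h ^ n + Df n \<xi>\<^sub>2 / fact n * h ^ n"
    unfolding \<eta> by (simp add: field_simps)
  ultimately show ?thesis
    using up \<open>\<eta> \<in> _\<close> by (intro bexI[of _ \<eta>]) auto
qed

lemma HM_step_error_real:
  fixes Df :: "nat \<Rightarrow> real \<Rightarrow> real"
  assumes "0 < \<tau>" "0 \<le> \<epsilon>"
    and Df: "\<And>m t. m < 4 \<Longrightarrow> t \<in> {c - \<tau>..c + \<tau>} \<Longrightarrow>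
               (Df m has_real_derivative Df (Suc m) t) (at t within {c - \<tau>..c + \<tau>})"
    and cont: "continuous_on {c - \<tau>..c + \<tau>} (Df 4)"
    and ode: "Df 1 c + \<epsilon> * Df 2 c = r"
    and HM: "1 / (2 * \<tau>) * (x - Df 0 (c - \<tau>)) + \<epsilon> / \<tau>^2 * (x - 2 * Df 0 c + Df 0 (c - \<tau>)) = r"
  shows "\<exists>\<eta>\<^sub>1\<in>{c - \<tau>..c + \<tau>}. \<exists>\<eta>\<^sub>2\<in>{c - \<tau>..c + \<tau>}.
           Df 0 (c + \<tau>) - x = 2 * \<tau>^4 / (\<tau> + 2 * \<epsilon>) * (1/6 * Df 3 \<eta>\<^sub>1)
                              + 2 * \<tau>^4 * \<epsilon> / (\<tau> + 2 * \<epsilon>) * (1/12 * Df 4 \<eta>\<^sub>2)"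
proof -
  have "continuous_on {c - \<tau>..c + \<tau>} (Df 3)"
    using Df[of 3] by (intro DERIV_continuous_on) auto
  then obtain \<eta>\<^sub>1 where "\<eta>\<^sub>1 \<in> {c - \<tau>..c + \<tau>}" and "Df 0 (c + \<tau>) + (-1) ^ 3 * Df 0 (c - \<tau>) =
      (\<Sum>m<3. (1 + (-1) ^ (3 + m)) * Df m c / fact m * \<tau> ^ m) + 2 * Df 3 \<eta>\<^sub>1 / fact 3 * \<tau> ^ 3"
    using Taylor_symmetric_within[of 3 \<tau> c Df] Df \<open>0 < \<tau>\<close> by auto
  then have odd: "Df 0 (c + \<tau>) - Df 0 (c - \<tau>) = 2 * \<tau> * Df 1 c + \<tau>^3 / 3 * Df 3 \<eta>\<^sub>1"
    by (simp add: eval_nat_numeral)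
  obtain \<eta>\<^sub>2 where "\<eta>\<^sub>2 \<in> {c - \<tau>..c + \<tau>}" and "Df 0 (c + \<tau>) + (-1) ^ 4 * Df 0 (c - \<tau>) =
      (\<Sum>m<4. (1 + (-1) ^ (4 + m)) * Df m c / fact m * \<tau> ^ m) + 2 * Df 4 \<eta>\<^sub>2 / fact 4 * \<tau> ^ 4"
    using Taylor_symmetric_within[of 4 \<tau> c Df] Df cont \<open>0 < \<tau>\<close> by auto
  then have even: "Df 0 (c + \<tau>) - 2 * Df 0 c + Df 0 (c - \<tau>) = \<tau>^2 * Df 2 c + \<tau>^4 / 12 * Df 4 \<eta>\<^sub>2"
    by (simp add: eval_nat_numeral algebra_simps)
  have scheme: "\<tau> * (x - Df 0 (c - \<tau>)) + 2 * \<epsilon> * (x - 2 * Df 0 c + Df 0 (c - \<tau>)) = 2 * \<tau>^2 * r"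
  proof -
    have "\<tau> * (x - Df 0 (c - \<tau>)) + 2 * \<epsilon> * (x - 2 * Df 0 c + Df 0 (c - \<tau>)) =
        2 * \<tau>^2 * (1 / (2 * \<tau>) * (x - Df 0 (c - \<tau>)) + \<epsilon> / \<tau>^2 * (x - 2 * Df 0 c + Df 0 (c - \<tau>)))"
      using \<open>0 < \<tau>\<close> by (simp add: field_simps power2_eq_square)
    then show ?thesis unfolding HM .
  qed
  have "(\<tau> + 2 * \<epsilon>) * (Df 0 (c + \<tau>) - x) =
          \<tau> * (Df 0 (c + \<tau>) - Df 0 (c - \<tau>)) + 2 * \<epsilon> * (Df 0 (c + \<tau>) - 2 * Df 0 c + Df 0 (c - \<tau>))
          - (\<tau> * (x - Df 0 (c - \<tau>)) + 2 * \<epsilon> * (x - 2 * Df 0 c + Df 0 (c - \<tau>)))"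
    by (simp add: algebra_simps)
  also have "\<dots> = 2 * \<tau>^4 * (1/6 * Df 3 \<eta>\<^sub>1) + 2 * \<tau>^4 * \<epsilon> * (1/12 * Df 4 \<eta>\<^sub>2)"
    unfolding odd even scheme ode[symmetric]
    by (simp add: algebra_simps power2_eq_square power3_eq_cube power4_eq_xxxx)
  finally have "Df 0 (c + \<tau>) - x =
      (2 * \<tau>^4 * (1/6 * Df 3 \<eta>\<^sub>1) + 2 * \<tau>^4 * \<epsilon> * (1/12 * Df 4 \<eta>\<^sub>2)) / (\<tau> + 2 * \<epsilon>)"
    using \<open>0 < \<tau>\<close> \<open>0 \<le> \<epsilon>\<close> by (simp add: eq_divide_eq mult.commute)
  then have "Df 0 (c + \<tau>) - x = 2 * \<tau>^4 / (\<tau> + 2 * \<epsilon>) * (1/6 * Df 3 \<eta>\<^sub>1)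
                              + 2 * \<tau>^4 * \<epsilon> / (\<tau> + 2 * \<epsilon>) * (1/12 * Df 4 \<eta>\<^sub>2)"
    by (simp only: add_divide_distrib times_divide_eq_left)
  then show ?thesis
    using \<open>\<eta>\<^sub>1 \<in> _\<close> \<open>\<eta>\<^sub>2 \<in> _\<close> by blast
qed

lemma has_vector_derivative_vec_nthI:
  fixes f :: "real \<Rightarrow> 'a::real_normed_vector^'n"
  assumes "\<And>i. ((\<lambda>x. f x $ i) has_vector_derivative f' $ i) F"
  shows "(f has_vector_derivative f') F"
  using assms unfolding has_vector_derivative_def has_derivative_def
  by (auto intro!: vec_tendstoI bounded_linear_scaleR_left simp: tendsto_vec_nth)

lemma has_real_derivative_vec_nth:
  "(f has_vector_derivative f') F \<Longrightarrow> ((\<lambda>x. f x $ i) has_real_derivative f' $ i) F"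
  unfolding has_real_derivative_iff_has_vector_derivative
  by (rule bounded_linear.has_vector_derivative[OF bounded_linear_vec_nth])

lemma HM_step_error:
  fixes Y0 Y1 Y2 Y3 Y4 :: "real \<Rightarrow> real^'n" and c \<tau> \<epsilon> :: real
  defines "J \<equiv> {c - \<tau>..c + \<tau>}"
  assumes "0 < \<tau>" "0 \<le> \<epsilon>"
    and Y01: "\<And>s. s \<in> J \<Longrightarrow> (Y0 has_vector_derivative Y1 s) (at s within J)"
    and Y12: "\<And>s. s \<in> J \<Longrightarrow> (Y1 has_vector_derivative Y2 s) (at s within J)"
    and Y23: "\<And>s. s \<in> J \<Longrightarrow> (Y2 has_vector_derivative Y3 s) (at s within J)"
    and Y34: "\<And>s. s \<in> J \<Longrightarrow> (Y3 has_vector_derivative Y4 s) (at s within J)"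
    and Y4: "continuous_on J Y4"
    and ode: "Y1 c + \<epsilon> *\<^sub>R Y2 c = r"
    and HM: "(1 / (2 * \<tau>)) *\<^sub>R (x - Y0 (c - \<tau>)) + (\<epsilon> / \<tau>^2) *\<^sub>R (x - 2 *\<^sub>R Y0 c + Y0 (c - \<tau>)) = r"
  shows "\<exists>C1 C2 :: real^'n.
           (\<forall>i. \<exists>\<eta>\<^sub>1\<in>J. C1 $ i = 1/6 * Y3 \<eta>\<^sub>1 $ i) \<and> (\<forall>i. \<exists>\<eta>\<^sub>2\<in>J. C2 $ i = 1/12 * Y4 \<eta>\<^sub>2 $ i) \<and>
           Y0 (c + \<tau>) - x = (2 * \<tau>^4 / (\<tau> + 2 * \<epsilon>)) *\<^sub>R C1 + (2 * \<tau>^4 * \<epsilon> / (\<tau> + 2 * \<epsilon>)) *\<^sub>R C2"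
proof -
  define Ys where "Ys = [Y0, Y1, Y2, Y3, Y4]"
  have "((\<lambda>s. (Ys ! m) s $ i) has_real_derivative (Ys ! Suc m) t $ i) (at t within J)"
    if "m < 4" "t \<in> J" for m t i
  proof -
    from that have "(Ys ! m has_vector_derivative (Ys ! Suc m) t) (at t within J)"
      by (auto simp: Ys_def less_Suc_eq numeral_eq_Suc Y01 Y12 Y23 Y34)
    then show ?thesis
      by (rule has_real_derivative_vec_nth)
  qed
  moreover have "Y1 c $ i + \<epsilon> * Y2 c $ i = r $ i" for i
    using ode by (auto simp: vec_eq_iff)
  moreover have "1 / (2 * \<tau>) * (x $ i - Y0 (c - \<tau>) $ i) + \<epsilon> / \<tau>^2 * (x $ i - 2 * Y0 c $ i + Y0 (c - \<tau>) $ i) = r $ i" for i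
    using HM by (auto simp: vec_eq_iff)
  ultimately have "\<exists>\<eta>\<^sub>1\<in>J. \<exists>\<eta>\<^sub>2\<in>J. Y0 (c + \<tau>) $ i - x $ i =
      2 * \<tau>^4 / (\<tau> + 2 * \<epsilon>) * (1/6 * Y3 \<eta>\<^sub>1 $ i) + 2 * \<tau>^4 * \<epsilon> / (\<tau> + 2 * \<epsilon>) * (1/12 * Y4 \<eta>\<^sub>2 $ i)" for i
    using HM_step_error_real[of \<tau> \<epsilon> c "\<lambda>m s. (Ys ! m) s $ i" "r $ i" "x $ i"] \<open>0 < \<tau>\<close> \<open>0 \<le> \<epsilon>\<close>
      continuous_on_component[OF Y4]
    by (simp add: J_def Ys_def numeral_eq_Suc)
  then obtain \<eta>\<^sub>1 \<eta>\<^sub>2 where \<eta>: "\<And>i. \<eta>\<^sub>1 i \<in> J \<and> \<eta>\<^sub>2 i \<in> J \<and> Y0 (c + \<tau>) $ i - x $ i =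
      2 * \<tau>^4 / (\<tau> + 2 * \<epsilon>) * (1/6 * Y3 (\<eta>\<^sub>1 i) $ i) + 2 * \<tau>^4 * \<epsilon> / (\<tau> + 2 * \<epsilon>) * (1/12 * Y4 (\<eta>\<^sub>2 i) $ i)"
    by metis
  show ?thesis
    by (rule exI[of _ "\<chi> i. 1/6 * Y3 (\<eta>\<^sub>1 i) $ i"], rule exI[of _ "\<chi> i. 1/12 * Y4 (\<eta>\<^sub>2 i) $ i"])
      (use \<eta> in \<open>auto simp: vec_eq_iff\<close>)
qed

section \<open>The matrix exponential\<close>

lemma bounded_bilinear_matrix_matrix_mult:
  "bounded_bilinear ((**) :: real^'n^'m \<Rightarrow> real^'p^'n \<Rightarrow> real^'p^'m)"
  unfolding bilinear_conv_bounded_bilinear[symmetric] bilinear_def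
  by (auto intro!: linearI simp: matrix_matrix_mult_def vec_eq_iff sum.distrib algebra_simps sum_distrib_left)

lemma bounded_bilinear_matrix_vector_mult:
  "bounded_bilinear ((*v) :: real^'n^'m \<Rightarrow> real^'n \<Rightarrow> real^'m)"
  unfolding bilinear_conv_bounded_bilinear[symmetric] bilinear_def
  by (auto intro!: linearI simp: matrix_vector_mult_def vec_eq_iff sum.distrib algebra_simps sum_distrib_left)

lemma bounded_linear_matrix_entry: "bounded_linear (\<lambda>A :: real^'n^'m. A $ i $ j)"
  using bounded_linear_compose[OF bounded_linear_vec_nth bounded_linear_vec_nth] .

lemma norm_le_onorm_cart:
  fixes A :: "real^'n^'m"
  shows "norm A \<le> real CARD('m) * real CARD('n) * onorm ((*v) A)"
proof -
  have "norm A \<le> (\<Sum>i\<in>UNIV. norm (A $ i))"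
    unfolding norm_vec_def by (rule L2_set_le_sum) simp
  also have "\<dots> \<le> (\<Sum>i\<in>UNIV. \<Sum>j\<in>UNIV. \<bar>A $ i $ j\<bar>)"
    by (intro sum_mono norm_le_l1_cart)
  also have "\<dots> \<le> (\<Sum>i\<in>(UNIV::'m set). \<Sum>j\<in>(UNIV::'n set). onorm ((*v) A))"
    by (intro sum_mono matrix_component_le_onorm)
  finally show ?thesis by simp
qed

lemma matpow_scaleR: "matpow (c *\<^sub>R M) k = c ^ k *\<^sub>R matpow M k"
  by (induction k) (auto simp: matrix_scalar_ac scalar_matrix_assoc mult.commute)

lemma matpow_commute:
  assumes "A ** M = M ** A"
  shows "A ** matpow M k = matpow M k ** A"
proof (induction k)
  case (Suc k)
  then show ?case by (metis assms matpow.simps(2) matrix_mul_assoc)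
qed simp

lemma onorm_matpow_le: "onorm ((*v) (matpow M k)) \<le> onorm ((*v) M) ^ k"
proof (induction k)
  case 0
  have "(*v) (mat 1 :: real^'n^'n) = id"
    by (rule ext) simp
  then show ?case using onorm_id_le by simp
next
  case (Suc k)
  have "(*v) (matpow M (Suc k)) = (*v) M \<circ> (*v) (matpow M k)"
    by (auto simp: fun_eq_iff matrix_vector_mul_assoc)
  then have "onorm ((*v) (matpow M (Suc k))) \<le> onorm ((*v) M) * onorm ((*v) (matpow M k))"
    by (simp add: onorm_compose)
  also have "\<dots> \<le> onorm ((*v) M) * onorm ((*v) M) ^ k"
    by (intro mult_left_mono Suc onorm_pos_le) auto
  finally show ?case by simp
qed

lemma summable_mat_exp: "summable (\<lambda>k. (1 / fact k) *\<^sub>R matpow (M :: real^'n^'n) k)"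
proof (rule summable_comparison_test)
  let ?c = "real CARD('n) * real CARD('n)" and ?r = "onorm ((*v) M)"
  show "summable (\<lambda>k. ?c * (?r ^ k /\<^sub>R fact k))"
    by (intro summable_mult summable_exp_generic)
  have "norm ((1 / fact k) *\<^sub>R matpow M k) \<le> ?c * (?r ^ k /\<^sub>R fact k)" for k
  proof -
    have "norm (matpow M k) \<le> ?c * ?r ^ k"
      using norm_le_onorm_cart[of "matpow M k"] onorm_matpow_le[of M k] by (simp add: order_trans)
    then show ?thesis by (simp add: divide_simps)
  qed
  then show "\<exists>N. \<forall>k\<ge>N. norm ((1 / fact k) *\<^sub>R matpow M k) \<le> ?c * (?r ^ k /\<^sub>R fact k)"
    by blast
qed

lemma mat_exp_scaleR: "mat_exp (u *\<^sub>R M) = (\<Sum>k. (u ^ k / fact k) *\<^sub>R matpow M k)"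
  unfolding mat_exp_def matpow_scaleR by (simp add: divide_inverse mult.commute)

lemma mat_exp_zero: "mat_exp (0 :: real^'n^'n) = mat 1"
proof -
  have "(\<lambda>k. (1 / fact k) *\<^sub>R matpow (0 :: real^'n^'n) k) = (\<lambda>k. if k = 0 then mat 1 else 0)"
    by (auto simp: fun_eq_iff gr0_conv_Suc)
  then show ?thesis
    unfolding mat_exp_def by (metis (no_types) sums_single[of 0 "\<lambda>_. mat 1"] sums_unique)
qed

lemma mat_exp_commute:
  assumes "A ** M = M ** A"
  shows "A ** mat_exp M = mat_exp M ** A"
proof -
  have "A ** mat_exp M = (\<Sum>k. A ** ((1 / fact k) *\<^sub>R matpow M k))"
    unfolding mat_exp_def
    by (rule bounded_linear.suminf[OF bounded_bilinear.bounded_linear_right[OF bounded_bilinear_matrix_matrix_mult] summable_mat_exp])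
  also have "\<dots> = (\<Sum>k. ((1 / fact k) *\<^sub>R matpow M k) ** A)"
    by (simp add: matrix_scalar_ac scalar_matrix_assoc[symmetric] matpow_commute[OF assms])
  also have "\<dots> = mat_exp M ** A"
    unfolding mat_exp_def
    by (rule bounded_linear.suminf[OF bounded_bilinear.bounded_linear_left[OF bounded_bilinear_matrix_matrix_mult] summable_mat_exp, symmetric])
  finally show ?thesis .
qed

lemma has_vector_derivative_mat_exp_scaleR:
  fixes M :: "real^'n^'n"
  shows "((\<lambda>u. mat_exp (u *\<^sub>R M)) has_vector_derivative M ** mat_exp (u *\<^sub>R M)) (at u within S)"
proof (intro has_vector_derivative_vec_nthI)
  fix i j
  define c where "c k = matpow M k $ i $ j / fact k" for k
  have series: "(\<lambda>k. (v ^ k / fact k) *\<^sub>R matpow M k) sums mat_exp (v *\<^sub>R M)" for v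
    using summable_mat_exp[of "v *\<^sub>R M"] unfolding mat_exp_scaleR
    by (simp add: matpow_scaleR summable_sums divide_inverse mult.commute)
  have entry: "(\<lambda>k. c k * v ^ k) sums (mat_exp (v *\<^sub>R M) $ i $ j)" for v
    using bounded_linear.sums[OF bounded_linear_matrix_entry[of i j] series] by (simp add: c_def mult.commute)
  have "(\<lambda>k. (u ^ k / fact k) *\<^sub>R (M ** matpow M k)) sums (M ** mat_exp (u *\<^sub>R M))"
    using bounded_linear.sums[OF bounded_bilinear.bounded_linear_right[OF bounded_bilinear_matrix_matrix_mult] series]
    by (simp add: matrix_scalar_ac scalar_matrix_assoc)
  from bounded_linear.sums[OF bounded_linear_matrix_entry[of i j] this]
  have "(\<lambda>k. ((u ^ k / fact k) *\<^sub>R (M ** matpow M k)) $ i $ j) sums ((M ** mat_exp (u *\<^sub>R M)) $ i $ j)" .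
  moreover have "diffs c k * u ^ k = ((u ^ k / fact k) *\<^sub>R (M ** matpow M k)) $ i $ j" for k
    by (simp add: diffs_def c_def del: of_nat_Suc)
  ultimately have "(\<lambda>k. diffs c k * u ^ k) sums ((M ** mat_exp (u *\<^sub>R M)) $ i $ j)"
    by simp
  moreover have "((\<lambda>v. \<Sum>k. c k * v ^ k) has_real_derivative (\<Sum>k. diffs c k * u ^ k)) (at u)"
    using entry by (intro termdiffs_strong_converges_everywhere) (auto simp: sums_iff)
  ultimately show "((\<lambda>v. mat_exp (v *\<^sub>R M) $ i $ j) has_vector_derivative (M ** mat_exp (u *\<^sub>R M)) $ i $ j) (at u within S)"
    using entry by (simp add: sums_iff has_real_derivative_iff_has_vector_derivative[symmetric] has_field_derivative_at_within)
qed

section \<open>Vector norms and the variation of constants estimate\<close>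

lemma has_integral_exp_phi:
  assumes "a \<le> b"
  shows "((\<lambda>s. exp (c * (b - s))) has_integral (b - a) * phi (c * (b - a))) {a..b}"
proof (cases "c = 0")
  case True
  then show ?thesis
    using has_integral_const_real[of "1 :: real" a b] assms by (simp add: phi_def real_scaleR_def)
next
  case False
  have "((\<lambda>s. - exp (c * (b - s)) / c) has_vector_derivative exp (c * (b - s))) (at s within {a..b})" for s
    unfolding has_real_derivative_iff_has_vector_derivative[symmetric]
    using False by (auto intro!: derivative_eq_intros)
  from fundamental_theorem_of_calculus[OF assms this]
  have "((\<lambda>s. exp (c * (b - s))) has_integral (exp (c * (b - a)) - 1) / c) {a..b}"
    by (simp add: diff_divide_distrib)
  moreover have "(exp (c * (b - a)) - 1) / c = (b - a) * phi (c * (b - a))"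
    using False by (simp add: phi_def)
  ultimately show ?thesis
    by simp
qed

context
  fixes \<nu> :: "real^'n \<Rightarrow> real"
  assumes \<nu>: "is_vector_norm \<nu>"
begin

lemma vector_norm_nonneg: "0 \<le> \<nu> x"
  and vector_norm_eq_0_iff: "\<nu> x = 0 \<longleftrightarrow> x = 0"
  and vector_norm_scaleR: "\<nu> (c *\<^sub>R x) = \<bar>c\<bar> * \<nu> x"
  and vector_norm_triangle: "\<nu> (x + y) \<le> \<nu> x + \<nu> y"
  using \<nu> unfolding is_vector_norm_def by auto

lemma vector_norm_zero [simp]: "\<nu> 0 = 0"
  using vector_norm_eq_0_iff by simp

lemma convex_on_vector_norm: "convex_on UNIV \<nu>"
proof (rule convex_onI)
  fix t :: real and x y
  assume "0 < t" "t < 1"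
  then show "\<nu> ((1 - t) *\<^sub>R x + t *\<^sub>R y) \<le> (1 - t) * \<nu> x + t * \<nu> y"
    using vector_norm_triangle[of "(1 - t) *\<^sub>R x" "t *\<^sub>R y"] by (simp add: vector_norm_scaleR)
qed simp

lemma continuous_on_vector_norm: "continuous_on S \<nu>"
  using convex_on_continuous[OF open_UNIV convex_on_vector_norm] continuous_on_subset by blast

lemma vector_norm_equivalent: "\<exists>m L. 0 < m \<and> 0 \<le> L \<and> (\<forall>x. m * norm x \<le> \<nu> x \<and> \<nu> x \<le> L * norm x)"
proof -
  obtain i :: 'n where True by simp
  have "axis i 1 \<in> sphere (0 :: real^'n) 1"
    by simp
  then have ne: "sphere (0 :: real^'n) 1 \<noteq> {}"
    by blast
  obtain p where p: "p \<in> sphere 0 1" "\<And>x. x \<in> sphere 0 1 \<Longrightarrow> \<nu> p \<le> \<nu> x"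
    using continuous_attains_inf[OF compact_sphere ne continuous_on_vector_norm] by blast
  obtain q where q: "\<And>x. x \<in> sphere 0 1 \<Longrightarrow> \<nu> x \<le> \<nu> q"
    using continuous_attains_sup[OF compact_sphere ne continuous_on_vector_norm] by blast
  have "0 < \<nu> p"
    using p(1) vector_norm_nonneg[of p] vector_norm_eq_0_iff[of p] by auto
  moreover have "\<nu> p * norm x \<le> \<nu> x \<and> \<nu> x \<le> \<nu> q * norm x" for x
  proof (cases "x = 0")
    case False
    then have u: "(1 / norm x) *\<^sub>R x \<in> sphere 0 1"
      by simp
    have "\<nu> x = norm x * \<nu> ((1 / norm x) *\<^sub>R x)"
      using False by (simp add: vector_norm_scaleR)
    then show ?thesis
      using p(2)[OF u] q[OF u] by (auto simp: mult.commute intro: mult_left_mono)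
  qed simp
  ultimately show ?thesis
    using vector_norm_nonneg[of q] by blast
qed

lemma vector_norm_dual:
  assumes "r < \<nu> x"
  shows "\<exists>w. (\<forall>v. w \<bullet> v \<le> \<nu> v) \<and> r < w \<bullet> x"
proof (cases "r < 0")
  case True
  then show ?thesis
    by (intro exI[of _ 0]) (simp add: vector_norm_nonneg)
next
  case False
  define \<rho> where "\<rho> = (r + \<nu> x) / 2"
  have \<rho>: "0 < \<rho>" "r < \<rho>" "\<rho> < \<nu> x"
    using assms False by (simp_all add: \<rho>_def)
  define B where "B = {v. \<nu> v \<le> \<rho>}"
  have convex: "convex B"
  proof (rule convexI)
    fix y z and u v :: real
    assume "y \<in> B" "z \<in> B" "0 \<le> u" "0 \<le> v" "u + v = 1"
    then have "\<nu> (u *\<^sub>R y + v *\<^sub>R z) \<le> u * \<rho> + v * \<rho>"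
      using convex_on_vector_norm unfolding convex_on_def B_def
      by (smt (verit) UNIV_I mem_Collect_eq mult_left_mono)
    then show "u *\<^sub>R y + v *\<^sub>R z \<in> B"
      using \<open>u + v = 1\<close> by (simp add: B_def flip: distrib_right)
  qed
  have closed: "closed B"
    unfolding B_def by (rule closed_Collect_le[OF continuous_on_vector_norm continuous_on_const])
  have "x \<notin> B"
    using \<rho> by (simp add: B_def)
  then obtain a b where ab: "a \<bullet> x < b" "\<And>v. v \<in> B \<Longrightarrow> b < a \<bullet> v"
    using separating_hyperplane_closed_point[OF convex closed] by blast
  have "b < 0"
    using ab(2)[of 0] \<rho> by (simp add: B_def vector_norm_eq_0_iff)
  define w where "w = (\<rho> / b) *\<^sub>R a"
  have "w \<bullet> v \<le> \<nu> v" for v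
  proof (cases "\<nu> v = 0")
    case False
    then have "0 < \<nu> v"
      using vector_norm_nonneg[of v] by simp
    then have "(\<rho> / \<nu> v) *\<^sub>R v \<in> B"
      using \<rho> by (simp add: B_def vector_norm_scaleR)
    then have "b < \<rho> / \<nu> v * (a \<bullet> v)"
      using ab(2) by fastforce
    then show ?thesis
      using \<open>0 < \<nu> v\<close> \<open>b < 0\<close> by (simp add: w_def field_simps)
  qed (simp add: vector_norm_eq_0_iff w_def)
  moreover have "\<rho> < w \<bullet> x"
    using ab(1) \<open>b < 0\<close> \<open>0 < \<rho>\<close> by (simp add: w_def field_simps)
  ultimately show ?thesis
    using \<rho> by (meson less_trans)
qed

lemma bdd_above_induced_norm: "bdd_above ((\<lambda>x. \<nu> (M *v x) / \<nu> x) ` {x. x \<noteq> 0})"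
proof -
  obtain m L where "0 < m" "0 \<le> L" and mL: "\<And>x. m * norm x \<le> \<nu> x \<and> \<nu> x \<le> L * norm x"
    using vector_norm_equivalent by blast
  have "\<nu> (M *v x) / \<nu> x \<le> L * onorm ((*v) M) / m" if "x \<noteq> 0" for x
  proof -
    have "0 < \<nu> x"
      using that vector_norm_nonneg[of x] vector_norm_eq_0_iff[of x] by auto
    have "\<nu> (M *v x) \<le> L * norm (M *v x)"
      using mL by blast
    also have "\<dots> \<le> L * (onorm ((*v) M) * norm x)"
      using \<open>0 \<le> L\<close> by (intro mult_left_mono onorm) simp_all
    also have "\<dots> \<le> L * (onorm ((*v) M) * (\<nu> x / m))"
      using mL[of x] \<open>0 < m\<close> \<open>0 \<le> L\<close>
      by (intro mult_left_mono onorm_pos_le) (simp_all add: field_simps)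
    finally show ?thesis
      using \<open>0 < \<nu> x\<close> by (simp add: divide_le_eq field_simps)
  qed
  then show ?thesis
    by (intro bdd_aboveI) auto
qed

lemma vector_norm_matrix_vector_mult_le: "\<nu> (M *v x) \<le> induced_norm \<nu> M * \<nu> x"
proof (cases "x = 0")
  case False
  then have "0 < \<nu> x"
    using vector_norm_nonneg[of x] vector_norm_eq_0_iff[of x] by auto
  have "\<nu> (M *v x) / \<nu> x \<le> induced_norm \<nu> M"
    unfolding induced_norm_def using False by (intro cSUP_upper bdd_above_induced_norm) auto
  then show ?thesis
    using \<open>0 < \<nu> x\<close> by (simp add: divide_le_eq)
qed simp

lemma induced_norm_nonneg: "0 \<le> induced_norm \<nu> M"
proof -
  obtain i :: 'n where True by simp
  have "0 \<le> \<nu> (M *v axis i 1) / \<nu> (axis i 1)"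
    by (intro divide_nonneg_nonneg vector_norm_nonneg)
  also have "\<dots> \<le> induced_norm \<nu> M"
    unfolding induced_norm_def by (intro cSUP_upper bdd_above_induced_norm) (simp add: axis_eq_0_iff)
  finally show ?thesis .
qed

lemma vector_norm_le_SUP:
  fixes f :: "real \<Rightarrow> real^'n"
  assumes "continuous_on {a..b} f" "s \<in> {a..b}"
  shows "\<nu> (f s) \<le> (SUP s\<in>{a..b}. \<nu> (f s))"
proof (rule cSUP_upper[OF assms(2)])
  have "compact ((\<lambda>s. \<nu> (f s)) ` {a..b})"
    by (intro compact_continuous_image continuous_on_compose2[OF continuous_on_vector_norm[of UNIV] assms(1)])
      (simp_all add: compact_Icc)
  then show "bdd_above ((\<lambda>s. \<nu> (f s)) ` {a..b})"
    by (intro bounded_imp_bdd_above compact_imp_bounded)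
qed

lemma vector_norm_duhamel_bound:
  fixes A :: "real^'n^'n" and D g :: "real \<Rightarrow> real^'n"
  assumes "a \<le> b"
    and D: "\<And>s. s \<in> {a..b} \<Longrightarrow> (D has_vector_derivative - (A *v D s) + g s) (at s within {a..b})"
    and "D a = 0"
    and decay: "\<forall>s\<ge>0. induced_norm \<nu> (mat_exp ((- s) *\<^sub>R A)) \<le> C * exp (- \<omega> * s)"
    and g: "\<And>s. s \<in> {a..b} \<Longrightarrow> \<nu> (g s) \<le> K"
  shows "\<nu> (D b) \<le> C * K * (b - a) * phi (- \<omega> * (b - a))"
proof -
  define E where "E = (\<lambda>s. mat_exp ((s - b) *\<^sub>R A))"
  have E': "(E has_vector_derivative A ** E s) (at s within {a..b})" for s
  proof -
    have "((\<lambda>s. s - b) has_vector_derivative 1) (at s within {a..b})"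
      using has_vector_derivative_diff[OF has_vector_derivative_id has_vector_derivative_const] by simp
    from vector_diff_chain_within[OF this has_vector_derivative_mat_exp_scaleR[of A "s - b"]]
    show ?thesis
      by (simp add: E_def o_def)
  qed
  have "((\<lambda>s. E s *v D s) has_vector_derivative E s *v g s) (at s within {a..b})"
    if "s \<in> {a..b}" for s
  proof -
    have "A ** E s = E s ** A"
      unfolding E_def by (rule mat_exp_commute) (simp add: matrix_scalar_ac)
    then have "E s *v (- (A *v D s) + g s) + (A ** E s) *v D s = E s *v g s"
      by (simp add: matrix_vector_mult_diff_distrib matrix_vector_mul_assoc)
    with bounded_bilinear.has_vector_derivative[OF bounded_bilinear_matrix_vector_mult E' D[OF that]]
    show ?thesis
      by simp
  qed
  from fundamental_theorem_of_calculus[OF \<open>a \<le> b\<close> this]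
  have integral: "((\<lambda>s. E s *v g s) has_integral D b) {a..b}"
    using \<open>D a = 0\<close> by (simp add: E_def mat_exp_zero)
  \<comment> \<open>\<nu> need not come from an inner product, so the integral is estimated against every
      linear functional below \<nu>, which determines \<nu> by \<open>vector_norm_dual\<close>.\<close>
  have bound: "w \<bullet> D b \<le> C * K * (b - a) * phi (- \<omega> * (b - a))" if w: "\<forall>v. w \<bullet> v \<le> \<nu> v" for w
  proof (rule has_integral_le)
    show "((\<lambda>s. w \<bullet> (E s *v g s)) has_integral w \<bullet> D b) {a..b}"
      using has_integral_linear[OF integral bounded_linear_inner_right] by (simp add: o_def)
    show "((\<lambda>s. C * K * exp (- \<omega> * (b - s))) has_integral C * K * (b - a) * phi (- \<omega> * (b - a))) {a..b}"
      using has_integral_mult_right[OF has_integral_exp_phi[OF \<open>a \<le> b\<close>, of "- \<omega>"], of "C * K"]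
      by (simp add: mult.assoc)
  next
    fix s assume s: "s \<in> {a..b}"
    have E_le: "induced_norm \<nu> (E s) \<le> C * exp (- \<omega> * (b - s))"
      using decay[rule_format, of "b - s"] s by (simp add: E_def)
    have "w \<bullet> (E s *v g s) \<le> induced_norm \<nu> (E s) * \<nu> (g s)"
      using w vector_norm_matrix_vector_mult_le order_trans by blast
    also have "\<dots> \<le> C * exp (- \<omega> * (b - s)) * K"
      using E_le g[OF s] induced_norm_nonneg vector_norm_nonneg
      by (intro mult_mono) (auto intro: order_trans)
    finally show "w \<bullet> (E s *v g s) \<le> C * K * exp (- \<omega> * (b - s))"
      by (simp add: mult_ac)
  qed
  show ?thesis
    using vector_norm_dual[of _ "D b"] bound by (meson not_le)
qed

lemma vector_norm_perturbed_ode_error: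
  fixes A :: "real^'n^'n" and f y yd Y0 Y1 Y2 :: "real \<Rightarrow> real^'n"
  assumes "a \<le> b" "0 \<le> \<epsilon>"
    and y_deriv: "\<And>s. s \<in> {a..b} \<Longrightarrow> (y has_vector_derivative yd s) (at s within {a..b})"
    and y_ode: "\<And>s. s \<in> {a..b} \<Longrightarrow> yd s = - (A *v y s) + f s"
    and Y_deriv: "\<And>s. s \<in> {a..b} \<Longrightarrow> (Y0 has_vector_derivative Y1 s) (at s within {a..b})"
    and Y_ode: "\<And>s. s \<in> {a..b} \<Longrightarrow> Y1 s + \<epsilon> *\<^sub>R Y2 s = - (A *v Y0 s) + f s"
    and Y2: "continuous_on {a..b} Y2"
    and init: "Y0 a = y a"
    and decay: "\<forall>s\<ge>0. induced_norm \<nu> (mat_exp ((- s) *\<^sub>R A)) \<le> C * exp (- \<omega> * s)"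
  shows "\<nu> (y b - Y0 b) \<le> C * \<epsilon> * (b - a) * phi (- \<omega> * (b - a)) * (SUP s\<in>{a..b}. \<nu> (Y2 s))"
proof -
  have "\<nu> (y b - Y0 b) \<le> C * (\<epsilon> * (SUP s\<in>{a..b}. \<nu> (Y2 s))) * (b - a) * phi (- \<omega> * (b - a))"
  proof (rule vector_norm_duhamel_bound[where D = "\<lambda>s. y s - Y0 s" and g = "\<lambda>s. \<epsilon> *\<^sub>R Y2 s", OF \<open>a \<le> b\<close> _ _ decay])
    fix s assume s: "s \<in> {a..b}"
    have "yd s - Y1 s = - (A *v (y s - Y0 s)) + \<epsilon> *\<^sub>R Y2 s"
      using y_ode[OF s] Y_ode[OF s] by (simp add: algebra_simps eq_diff_eq)
    then show "((\<lambda>s. y s - Y0 s) has_vector_derivative - (A *v (y s - Y0 s)) + \<epsilon> *\<^sub>R Y2 s) (at s within {a..b})"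
      using has_vector_derivative_diff[OF y_deriv[OF s] Y_deriv[OF s]] by simp
    show "\<nu> (\<epsilon> *\<^sub>R Y2 s) \<le> \<epsilon> * (SUP s\<in>{a..b}. \<nu> (Y2 s))"
      using vector_norm_le_SUP[OF Y2 s] \<open>0 \<le> \<epsilon>\<close> by (simp add: vector_norm_scaleR mult_left_mono)
  qed (simp add: init)
  then show ?thesis
    by (simp add: mult_ac)
qed

end

theorem proposition2:
  fixes A :: "real^'n^'n" and \<omega> \<epsilon> \<tau> :: real and n :: nat
    and f y yd :: "real \<Rightarrow> real^'n"
    and I :: "real set"
    and Y0 Y1 Y2 Y3 Y4 :: "real \<Rightarrow> real^'n"
    and ynext :: "real^'n"
  defines "t \<equiv> (\<lambda>k::nat. real k * \<tau>)"
  assumes symA: "symmetric_matrix A" and psdA: "psd_matrix A"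
    and omega: "smallest_eigenvalue A \<omega>" and omega_nonneg: "0 \<le> \<omega>"
    and f_cont: "continuous_on UNIV f"
    and eps: "\<epsilon> > 0" and tau: "\<tau> > 0" and n: "n \<ge> 1"
    and I: "is_interval I" "{t (n - 1) .. t (n + 1)} \<subseteq> I"
    \<comment> \<open>y solves y' = -A y + f\<close>
    and y_deriv: "\<And>s. s \<in> I \<Longrightarrow> (y has_vector_derivative yd s) (at s within I)"
    and y_ode: "\<And>s. s \<in> I \<Longrightarrow> yd s = - (A *v y s) + f s"
    \<comment> \<open>ytilde = Y0 with derivatives Y1 .. Y4, four times continuously differentiable\<close>
    and Y01: "\<And>s. s \<in> I \<Longrightarrow> (Y0 has_vector_derivative Y1 s) (at s within I)"
    and Y12: "\<And>s. s \<in> I \<Longrightarrow> (Y1 has_vector_derivative Y2 s) (at s within I)"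
    and Y23: "\<And>s. s \<in> I \<Longrightarrow> (Y2 has_vector_derivative Y3 s) (at s within I)"
    and Y34: "\<And>s. s \<in> I \<Longrightarrow> (Y3 has_vector_derivative Y4 s) (at s within I)"
    and Y4_cont: "continuous_on I Y4"
    and Y_ode: "\<And>s. s \<in> I \<Longrightarrow> Y1 s + \<epsilon> *\<^sub>R Y2 s = - (A *v Y0 s) + f s"
    and Y_init0: "Y0 (t n) = y (t n)" and Y_init1: "Y1 (t n) = yd (t n)"
    \<comment> \<open>one HM step from y^{n-1} = ytilde(t_{n-1}), y^n = ytilde(t_n)\<close>
    and HM: "(1 / (2 * \<tau>)) *\<^sub>R (ynext - Y0 (t (n - 1)))
             + (\<epsilon> / \<tau>^2) *\<^sub>R (ynext - 2 *\<^sub>R Y0 (t n) + Y0 (t (n - 1)))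
             = - (A *v Y0 (t n)) + f (t n)"
  shows "(\<exists>C1 C2 :: real^'n.
            (\<forall>i. \<exists>\<eta>1 \<in> {t (n - 1) .. t (n + 1)}. C1 $ i = (1/6) * Y3 \<eta>1 $ i) \<and>
            (\<forall>i. \<exists>\<eta>2 \<in> {t (n - 1) .. t (n + 1)}. C2 $ i = (1/12) * Y4 \<eta>2 $ i) \<and>
            y (t (n + 1)) - ynext =
              (2 * \<tau>^4 / (\<tau> + 2 * \<epsilon>)) *\<^sub>R C1
              + (2 * \<tau>^4 * \<epsilon> / (\<tau> + 2 * \<epsilon>)) *\<^sub>R C2
              + (y (t (n + 1)) - Y0 (t (n + 1))))
         \<and> (\<forall>(\<nu> :: real^'n \<Rightarrow> real) C.
              is_vector_norm \<nu> \<longrightarrow>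
              (\<forall>s\<ge>0. induced_norm \<nu> (mat_exp ((- s) *\<^sub>R A)) \<le> C * exp (- \<omega> * s)) \<longrightarrow>
              \<nu> (y (t (n + 1)) - Y0 (t (n + 1)))
                \<le> C * \<epsilon> * \<tau> * phi (- \<omega> * \<tau>) * (SUP s \<in> {t n .. t (n + 1)}. \<nu> (Y2 s)))"
proof -
  have t: "t (n - 1) = t n - \<tau>" "t (n + 1) = t n + \<tau>"
    using n by (simp_all add: t_def of_nat_diff algebra_simps)
  have J: "{t n - \<tau>..t n + \<tau>} \<subseteq> I" and K: "{t n..t n + \<tau>} \<subseteq> I"
    using I(2) unfolding t by auto
  then have "t n \<in> I"
    using tau by auto
  have restrict: "(F has_vector_derivative F' s) (at s within S)"
    if "\<And>s. s \<in> I \<Longrightarrow> (F has_vector_derivative F' s) (at s within I)" "S \<subseteq> I" "s \<in> S"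
    for F F' :: "real \<Rightarrow> real^'n" and S s
    using that has_vector_derivative_within_subset by blast
  have Y2_cont: "continuous_on I Y2"
    unfolding continuous_on_eq_continuous_within using Y23 has_vector_derivative_continuous by blast
  obtain C1 C2 :: "real^'n" where C: "\<forall>i. \<exists>\<eta>\<^sub>1\<in>{t n - \<tau>..t n + \<tau>}. C1 $ i = 1/6 * Y3 \<eta>\<^sub>1 $ i"
      "\<forall>i. \<exists>\<eta>\<^sub>2\<in>{t n - \<tau>..t n + \<tau>}. C2 $ i = 1/12 * Y4 \<eta>\<^sub>2 $ i"
    and step: "Y0 (t n + \<tau>) - ynext = (2 * \<tau>^4 / (\<tau> + 2 * \<epsilon>)) *\<^sub>R C1 + (2 * \<tau>^4 * \<epsilon> / (\<tau> + 2 * \<epsilon>)) *\<^sub>R C2"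
    using HM_step_error[OF tau less_imp_le[OF eps] restrict[OF Y01 J] restrict[OF Y12 J]
        restrict[OF Y23 J] restrict[OF Y34 J] continuous_on_subset[OF Y4_cont J]
        Y_ode[OF \<open>t n \<in> I\<close>] HM[unfolded t]]
    by blast
  have "\<nu> (y (t n + \<tau>) - Y0 (t n + \<tau>)) \<le> C * \<epsilon> * \<tau> * phi (- \<omega> * \<tau>) * (SUP s\<in>{t n..t n + \<tau>}. \<nu> (Y2 s))"
    if "is_vector_norm \<nu>" "\<forall>s\<ge>0. induced_norm \<nu> (mat_exp ((- s) *\<^sub>R A)) \<le> C * exp (- \<omega> * s)"
    for \<nu> C
    using vector_norm_perturbed_ode_error[OF that(1) _ less_imp_le[OF eps] restrict[OF y_deriv K] _
        restrict[OF Y01 K] _ continuous_on_subset[OF Y2_cont K] Y_init0 that(2)]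
      y_ode Y_ode K tau
    by (simp add: subset_iff)
  moreover have "y (t n + \<tau>) - ynext = (Y0 (t n + \<tau>) - ynext) + (y (t n + \<tau>) - Y0 (t n + \<tau>))"
    by simp
  ultimately show ?thesis
    using C step unfolding t by auto
qed

end
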